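(* Let $V$ and $W$ be two-dimensional inner-product spaces, and let $x,y\in V$ be linearly independent vectors of equal length, with $\theta$ the angle between them. Then for every linear map $A\in\mathrm{Hom}(V,W)$, \[ |A|^2\le\frac{2}{1-\cos\theta}\left(\frac{|Ax|^2}{|x|^2}+\frac{|Ay|^2}{|y|^2}+\frac{|A(x+y)|^2}{|x+y|^2}\right). \]
   Context: $|A|$ denotes the Frobenius (Hilbert–Schmidt) norm of $A$ with respect to the inner products on $V$ and $W$. *)

theory Defs
  imports "HOL-Analysis.Analysis"
begin

definition frob_norm :: "('a::euclidean_space \<Rightarrow> 'b::real_inner) \<Rightarrow> real" where
  "frob_norm A = sqrt (\<Sum>b\<in>Basis. (norm (A b))\<^sup>2)"

definition vec_angle :: "'a::real_inner \<Rightarrow> 'a \<Rightarrow> real" where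
  "vec_angle x y = arccos ((x \<bullet> y) / (norm x * norm y))"

end

theory Submission
  imports Defs
begin

text \<open>Write n = |x|^2 = |y|^2 and d = x \<bullet> y, so that cos \<theta> = d/n and |x + y|^2 = 2(n + d).
  Expanding an orthonormal basis in the basis x, y by Cramer's rule and summing with Parseval gives
  (n^2 - d^2) |A|^2 = n (|Ax|^2 + |Ay|^2) - 2 d (Ax \<bullet> Ay).  Writing 2 (Ax \<bullet> Ay) through
  |A(x + y)|^2, the bound becomes an inequality between two fractions over (n - d)(n + d) > 0
  whose numerators differ by (n + d)(|Ax|^2 + |Ay|^2 + |A(x + y)|^2) \<ge> 0.\<close>

lemma cos_vec_angle: "cos (vec_angle x y) = (x \<bullet> y) / (norm x * norm y)"
proof -
  have "\<bar>x \<bullet> y\<bar> \<le> norm x * norm y"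
    by (rule Cauchy_Schwarz_ineq2)
  then have "\<bar>(x \<bullet> y) / (norm x * norm y)\<bar> \<le> 1"
    by (cases "norm x * norm y = 0") (simp_all add: abs_div)
  then show ?thesis
    unfolding vec_angle_def by (rule cos_arccos_abs)
qed

lemma abs_inner_less_norm_mult_if_independent:
  fixes x y :: "'a::real_inner"
  assumes "independent {x, y}" and "x \<noteq> y"
  shows "\<bar>x \<bullet> y\<bar> < norm x * norm y"
proof (rule ccontr)
  assume "\<not> \<bar>x \<bullet> y\<bar> < norm x * norm y"
  then have "\<bar>x \<bullet> y\<bar> = norm x * norm y"
    using Cauchy_Schwarz_ineq2[of x y] by linarith
  then obtain s where s: "norm x *\<^sub>R y = s *\<^sub>R x"
    unfolding norm_cauchy_schwarz_abs_eq by (auto simp flip: scaleR_minus_left)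
  have "x \<noteq> 0"
    using assms(1) dependent_zero by blast
  then have "y = (s / norm x) *\<^sub>R x"
    using arg_cong[OF s, of "scaleR (inverse (norm x))"] by (simp add: divide_inverse_commute)
  then have "y \<in> span ({x, y} - {y})"
    using assms(2) by (simp add: insert_Diff_if span_scale span_base)
  then show False
    using assms(1) by (auto simp: dependent_def)
qed

lemma span_eq_UNIV_if_independent_pair:
  fixes x y :: "'a::euclidean_space"
  assumes "DIM('a) = 2" and "independent {x, y}" and "x \<noteq> y"
  shows "span {x, y} = UNIV"
  using assms card_eq_dim[of "{x, y}" UNIV] by (auto simp: dim_UNIV)

text \<open>Cramer's rule for the Gram system of two vectors; no independence is needed.\<close>
lemma gram_det_scaleR_in_span2:
  fixes x y z :: "'a::real_inner"
  assumes "z \<in> span {x, y}"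
  shows "((x \<bullet> x) * (y \<bullet> y) - (x \<bullet> y)\<^sup>2) *\<^sub>R z =
           ((y \<bullet> y) * (z \<bullet> x) - (x \<bullet> y) * (z \<bullet> y)) *\<^sub>R x
         + ((x \<bullet> x) * (z \<bullet> y) - (x \<bullet> y) * (z \<bullet> x)) *\<^sub>R y"
proof -
  obtain a c where z: "z = a *\<^sub>R x + c *\<^sub>R y"
    using assms by (auto simp: span_insert span_singleton algebra_simps)
  have zx: "z \<bullet> x = a * (x \<bullet> x) + c * (x \<bullet> y)" and zy: "z \<bullet> y = a * (x \<bullet> y) + c * (y \<bullet> y)"
    by (simp_all add: z inner_add_left inner_commute[of y x])
  have "(y \<bullet> y) * (z \<bullet> x) - (x \<bullet> y) * (z \<bullet> y) = ((x \<bullet> x) * (y \<bullet> y) - (x \<bullet> y)\<^sup>2) * a"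
       "(x \<bullet> x) * (z \<bullet> y) - (x \<bullet> y) * (z \<bullet> x) = ((x \<bullet> x) * (y \<bullet> y) - (x \<bullet> y)\<^sup>2) * c"
    unfolding zx zy by (simp_all add: algebra_simps power2_eq_square)
  then show ?thesis
    by (simp add: z scaleR_add_right)
qed

lemma power2_norm_add_scaleR:
  fixes p q :: "'a::real_inner"
  shows "(norm (a *\<^sub>R p + c *\<^sub>R q))\<^sup>2 = a\<^sup>2 * (norm p)\<^sup>2 + 2 * a * c * (p \<bullet> q) + c\<^sup>2 * (norm q)\<^sup>2"
  unfolding power2_norm_eq_inner
  by (simp add: inner_add_left inner_add_right inner_commute[of q p] algebra_simps power2_eq_square)

text \<open>The trace of the Gram matrix of A x, A y against the inverse Gram matrix of x, y;
  the coefficients of a basis vector b are b \<bullet> \<xi> and b \<bullet> \<eta>, summed by Parseval.\<close>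
lemma gram_det_mult_frob_norm_sq:
  fixes x y :: "'v::euclidean_space" and A :: "'v \<Rightarrow> 'w::real_inner"
  assumes span: "span {x, y} = UNIV" and strict_cs: "\<bar>x \<bullet> y\<bar> < norm x * norm y"
    and "linear A"
  shows "((x \<bullet> x) * (y \<bullet> y) - (x \<bullet> y)\<^sup>2) * (frob_norm A)\<^sup>2 =
           (y \<bullet> y) * (norm (A x))\<^sup>2 + (x \<bullet> x) * (norm (A y))\<^sup>2 - 2 * (x \<bullet> y) * (A x \<bullet> A y)"
    (is "?D * _ = ?rhs")
proof -
  define \<xi> where "\<xi> = (y \<bullet> y) *\<^sub>R x - (x \<bullet> y) *\<^sub>R y"
  define \<eta> where "\<eta> = (x \<bullet> x) *\<^sub>R y - (x \<bullet> y) *\<^sub>R x"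
  have parseval: "(\<Sum>b\<in>Basis. (b \<bullet> p) * (b \<bullet> q)) = p \<bullet> q" for p q :: 'v
    by (subst euclidean_inner[of p q]) (simp add: inner_commute)
  have expand: "?D\<^sup>2 * (norm (A b))\<^sup>2 =
      (b \<bullet> \<xi>)\<^sup>2 * (norm (A x))\<^sup>2 + 2 * (b \<bullet> \<eta>) * (b \<bullet> \<xi>) * (A x \<bullet> A y)
      + (b \<bullet> \<eta>)\<^sup>2 * (norm (A y))\<^sup>2" for b
  proof -
    have "?D *\<^sub>R b = (b \<bullet> \<xi>) *\<^sub>R x + (b \<bullet> \<eta>) *\<^sub>R y"
      using gram_det_scaleR_in_span2[of b x y] span by (simp add: \<xi>_def \<eta>_def inner_diff_right)
    then have "A (?D *\<^sub>R b) = A ((b \<bullet> \<xi>) *\<^sub>R x + (b \<bullet> \<eta>) *\<^sub>R y)"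
      by simp
    then have "?D *\<^sub>R A b = (b \<bullet> \<xi>) *\<^sub>R A x + (b \<bullet> \<eta>) *\<^sub>R A y"
      using \<open>linear A\<close> by (simp add: linear_add linear_scale)
    then have "(norm (?D *\<^sub>R A b))\<^sup>2 = (norm ((b \<bullet> \<xi>) *\<^sub>R A x + (b \<bullet> \<eta>) *\<^sub>R A y))\<^sup>2"
      by simp
    then show ?thesis
      by (simp add: power2_norm_add_scaleR power_mult_distrib mult_ac)
  qed
  have "?D\<^sup>2 * (frob_norm A)\<^sup>2 = (\<Sum>b\<in>Basis. ?D\<^sup>2 * (norm (A b))\<^sup>2)"
    unfolding frob_norm_def by (simp add: sum_nonneg sum_distrib_left)
  also have "\<dots> = (norm (A x))\<^sup>2 * (\<Sum>b\<in>Basis. (b \<bullet> \<xi>) * (b \<bullet> \<xi>))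
      + 2 * (A x \<bullet> A y) * (\<Sum>b\<in>Basis. (b \<bullet> \<eta>) * (b \<bullet> \<xi>))
      + (norm (A y))\<^sup>2 * (\<Sum>b\<in>Basis. (b \<bullet> \<eta>) * (b \<bullet> \<eta>))"
    unfolding expand by (simp add: sum.distrib sum_distrib_left power2_eq_square mult_ac)
  also have "\<dots> = (norm (A x))\<^sup>2 * (\<xi> \<bullet> \<xi>) + 2 * (A x \<bullet> A y) * (\<eta> \<bullet> \<xi>) + (norm (A y))\<^sup>2 * (\<eta> \<bullet> \<eta>)"
    by (simp only: parseval)
  also have "\<dots> = ?D * ?rhs"
    by (simp add: \<xi>_def \<eta>_def inner_diff_left inner_diff_right inner_commute[of y x]
        algebra_simps power2_eq_square)
  finally have "?D\<^sup>2 * (frob_norm A)\<^sup>2 = ?D * ?rhs" .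
  moreover have "(x \<bullet> y)\<^sup>2 < (norm x * norm y)\<^sup>2"
    using strict_cs abs_le_square_iff[of "norm x * norm y" "x \<bullet> y"] by auto
  then have "?D \<noteq> 0"
    by (simp add: power_mult_distrib power2_norm_eq_inner)
  ultimately show ?thesis
    by (simp add: power2_eq_square)
qed

lemma frob_bound_from_gram:
  fixes n d P Q S :: real
  assumes "\<bar>d\<bar> < n" and "0 \<le> P" and "0 \<le> Q" and "0 \<le> S"
  shows "(n * (P + Q) - d * (S - P - Q)) / ((n - d) * (n + d))
           \<le> 2 / (1 - d / n) * (P / n + Q / n + S / (2 * n + 2 * d))"
proof -
  have "n > 0" "n - d > 0" "n + d > 0"
    using assms(1) by linarith+
  then have rhs: "2 / (1 - d / n) * (P / n + Q / n + S / (2 * n + 2 * d))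
      = (2 * (n + d) * (P + Q) + n * S) / ((n - d) * (n + d))"
    by (simp add: divide_simps) (simp add: algebra_simps)
  have "0 \<le> (n + d) * (P + Q + S)"
    using \<open>n + d > 0\<close> assms(2-4) by simp
  then have "n * (P + Q) - d * (S - P - Q) \<le> 2 * (n + d) * (P + Q) + n * S"
    by (simp add: algebra_simps)
  then show ?thesis
    unfolding rhs using \<open>n - d > 0\<close> \<open>n + d > 0\<close> by (simp add: divide_right_mono)
qed

theorem lemmaA2:
  fixes x y :: "'v::euclidean_space" and A :: "'v \<Rightarrow> 'w::euclidean_space"
  assumes "DIM('v) = 2" and "DIM('w) = 2"
    and "independent {x, y}" and "x \<noteq> y"
    and "norm x = norm y"
    and "linear A"
  shows "(frob_norm A)\<^sup>2 \<le> 2 / (1 - cos (vec_angle x y)) *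
           ((norm (A x))\<^sup>2 / (norm x)\<^sup>2 + (norm (A y))\<^sup>2 / (norm y)\<^sup>2
            + (norm (A (x + y)))\<^sup>2 / (norm (x + y))\<^sup>2)"
proof -
  define n where "n = (norm x)\<^sup>2"
  define d where "d = x \<bullet> y"
  have n: "(norm x)\<^sup>2 = n" "(norm y)\<^sup>2 = n" "x \<bullet> x = n" "y \<bullet> y = n" "norm x * norm y = n"
    using assms(5) by (simp_all add: n_def dot_square_norm power2_eq_square)
  have strict_cs: "\<bar>d\<bar> < n"
    using abs_inner_less_norm_mult_if_independent[OF assms(3,4)] by (simp add: n d_def)
  have norm_sum: "(norm (x + y))\<^sup>2 = 2 * n + 2 * d"
    using dot_norm[of x y] assms(5) by (simp add: n_def d_def)
  have cross: "2 * (A x \<bullet> A y) = (norm (A (x + y)))\<^sup>2 - (norm (A x))\<^sup>2 - (norm (A y))\<^sup>2"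
    using dot_norm[of "A x" "A y"] \<open>linear A\<close> by (simp add: linear_add)
  have "(n - d) * (n + d) * (frob_norm A)\<^sup>2 = n * ((norm (A x))\<^sup>2 + (norm (A y))\<^sup>2)
      - d * ((norm (A (x + y)))\<^sup>2 - (norm (A x))\<^sup>2 - (norm (A y))\<^sup>2)"
    using gram_det_mult_frob_norm_sq[OF span_eq_UNIV_if_independent_pair[OF assms(1,3,4)]
        abs_inner_less_norm_mult_if_independent[OF assms(3,4)] \<open>linear A\<close>]
    by (simp add: n d_def flip: cross) (simp add: power2_eq_square algebra_simps)
  then have "(frob_norm A)\<^sup>2 = (n * ((norm (A x))\<^sup>2 + (norm (A y))\<^sup>2)
      - d * ((norm (A (x + y)))\<^sup>2 - (norm (A x))\<^sup>2 - (norm (A y))\<^sup>2)) / ((n - d) * (n + d))"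
    using strict_cs by (simp add: eq_divide_eq mult.commute abs_less_iff)
  also have "\<dots> \<le> 2 / (1 - d / n) *
      ((norm (A x))\<^sup>2 / n + (norm (A y))\<^sup>2 / n + (norm (A (x + y)))\<^sup>2 / (2 * n + 2 * d))"
    using strict_cs by (rule frob_bound_from_gram) simp_all
  also have "\<dots> = 2 / (1 - cos (vec_angle x y)) *
           ((norm (A x))\<^sup>2 / (norm x)\<^sup>2 + (norm (A y))\<^sup>2 / (norm y)\<^sup>2
            + (norm (A (x + y)))\<^sup>2 / (norm (x + y))\<^sup>2)"
    by (simp add: cos_vec_angle norm_sum n flip: d_def)
  finally show ?thesis .
qed

end
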